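(* Let $\mathcal{A}$ be an abelian category and $\xi\colon 0\to K\to X\xrightarrow{\alpha}Y\to 0$ a short exact sequence. The following are equivalent: (1) $\alpha$ is right minimal; (2) every endomorphism $u\colon K\to K$ with $[\xi]=[u.\xi]$ is an automorphism; (3) the connecting map $c(\xi,K)\colon\mathrm{Hom}_{\mathcal{A}}(K,K)\to\mathrm{Ext}^1_{\mathcal{A}}(Y,K)$ is a right minimal morphism of $\Gamma(K)$-modules.
   Context: A morphism $\alpha\colon X\to Y$ is right minimal if every endomorphism $u\colon X\to X$ with $\alpha=\alpha\circ u$ is an automorphism (same definition in any category, e.g. of modules). $u.\xi$ is the pushout of $\xi$ along $u$; $c(\xi,K)$ sends $u$ to $[u.\xi]$. $\Gamma(K)=\mathrm{End}_{\mathcal{A}}(K)$. *)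

theory Defs
  imports Main
begin

text \<open>A preadditive category presented by carrier sets: objects, arrows,
 domain/codomain, composition (Comp g f = g after f), identities, addition of
 parallel arrows and zero arrows Zero a b : a -> b.\<close>

record ('o,'m) acat =
  Obj  :: "'o set"
  Arr  :: "'m set"
  Dom  :: "'m \<Rightarrow> 'o"
  Cod  :: "'m \<Rightarrow> 'o"
  Comp :: "'m \<Rightarrow> 'm \<Rightarrow> 'm"
  Ident :: "'o \<Rightarrow> 'm"
  Add  :: "'m \<Rightarrow> 'm \<Rightarrow> 'm"
  Zero :: "'o \<Rightarrow> 'o \<Rightarrow> 'm"

definition hom :: "('o,'m) acat \<Rightarrow> 'o \<Rightarrow> 'o \<Rightarrow> 'm set" where
  "hom C a b = {f \<in> Arr C. Dom C f = a \<and> Cod C f = b}"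

definition category :: "('o,'m) acat \<Rightarrow> bool" where
  "category C \<longleftrightarrow>
     (\<forall>f\<in>Arr C. Dom C f \<in> Obj C \<and> Cod C f \<in> Obj C) \<and>
     (\<forall>a\<in>Obj C. Ident C a \<in> hom C a a) \<and>
     (\<forall>a\<in>Obj C. \<forall>b\<in>Obj C. \<forall>c\<in>Obj C. \<forall>f\<in>hom C a b. \<forall>g\<in>hom C b c.
         Comp C g f \<in> hom C a c) \<and>
     (\<forall>a\<in>Obj C. \<forall>b\<in>Obj C. \<forall>c\<in>Obj C. \<forall>d\<in>Obj C.
        \<forall>f\<in>hom C a b. \<forall>g\<in>hom C b c. \<forall>h\<in>hom C c d.
         Comp C h (Comp C g f) = Comp C (Comp C h g) f) \<and>
     (\<forall>f\<in>Arr C. Comp C (Ident C (Cod C f)) f = f \<and> Comp C f (Ident C (Dom C f)) = f)"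

definition preadditive :: "('o,'m) acat \<Rightarrow> bool" where
  "preadditive C \<longleftrightarrow> category C \<and>
     (\<forall>a\<in>Obj C. \<forall>b\<in>Obj C.
        Zero C a b \<in> hom C a b \<and>
        (\<forall>f\<in>hom C a b. \<forall>g\<in>hom C a b. Add C f g \<in> hom C a b \<and> Add C f g = Add C g f) \<and>
        (\<forall>f\<in>hom C a b. \<forall>g\<in>hom C a b. \<forall>h\<in>hom C a b. Add C (Add C f g) h = Add C f (Add C g h)) \<and>
        (\<forall>f\<in>hom C a b. Add C f (Zero C a b) = f) \<and>
        (\<forall>f\<in>hom C a b. \<exists>g\<in>hom C a b. Add C f g = Zero C a b)) \<and>
     (\<forall>a\<in>Obj C. \<forall>b\<in>Obj C. \<forall>c\<in>Obj C.
        (\<forall>f\<in>hom C a b. \<forall>f'\<in>hom C a b. \<forall>g\<in>hom C b c.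
           Comp C g (Add C f f') = Add C (Comp C g f) (Comp C g f')) \<and>
        (\<forall>f\<in>hom C a b. \<forall>g\<in>hom C b c. \<forall>g'\<in>hom C b c.
           Comp C (Add C g g') f = Add C (Comp C g f) (Comp C g' f)))"

definition zero_object :: "('o,'m) acat \<Rightarrow> 'o \<Rightarrow> bool" where
  "zero_object C z \<longleftrightarrow> z \<in> Obj C \<and>
     (\<forall>a\<in>Obj C. (\<exists>!f. f \<in> hom C z a) \<and> (\<exists>!f. f \<in> hom C a z))"

definition is_biproduct ::
  "('o,'m) acat \<Rightarrow> 'o \<Rightarrow> 'o \<Rightarrow> 'o \<Rightarrow> 'm \<Rightarrow> 'm \<Rightarrow> 'm \<Rightarrow> 'm \<Rightarrow> bool" where
  "is_biproduct C a b p i1 i2 p1 p2 \<longleftrightarrow> p \<in> Obj C \<and>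
     i1 \<in> hom C a p \<and> i2 \<in> hom C b p \<and> p1 \<in> hom C p a \<and> p2 \<in> hom C p b \<and>
     Comp C p1 i1 = Ident C a \<and> Comp C p2 i2 = Ident C b \<and>
     Comp C p1 i2 = Zero C b a \<and> Comp C p2 i1 = Zero C a b \<and>
     Add C (Comp C i1 p1) (Comp C i2 p2) = Ident C p"

definition is_kernel :: "('o,'m) acat \<Rightarrow> 'm \<Rightarrow> 'm \<Rightarrow> bool" where
  "is_kernel C k f \<longleftrightarrow> f \<in> Arr C \<and> k \<in> Arr C \<and> Cod C k = Dom C f \<and>
     Comp C f k = Zero C (Dom C k) (Cod C f) \<and>
     (\<forall>t\<in>Obj C. \<forall>g\<in>hom C t (Dom C f). Comp C f g = Zero C t (Cod C f) \<longrightarrow>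
        (\<exists>!h. h \<in> hom C t (Dom C k) \<and> Comp C k h = g))"

definition is_cokernel :: "('o,'m) acat \<Rightarrow> 'm \<Rightarrow> 'm \<Rightarrow> bool" where
  "is_cokernel C q f \<longleftrightarrow> f \<in> Arr C \<and> q \<in> Arr C \<and> Dom C q = Cod C f \<and>
     Comp C q f = Zero C (Dom C f) (Cod C q) \<and>
     (\<forall>t\<in>Obj C. \<forall>g\<in>hom C (Cod C f) t. Comp C g f = Zero C (Dom C f) t \<longrightarrow>
        (\<exists>!h. h \<in> hom C (Cod C q) t \<and> Comp C h q = g))"

definition mono :: "('o,'m) acat \<Rightarrow> 'm \<Rightarrow> bool" where
  "mono C f \<longleftrightarrow> f \<in> Arr C \<and>
     (\<forall>t\<in>Obj C. \<forall>g\<in>hom C t (Dom C f). \<forall>h\<in>hom C t (Dom C f).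
        Comp C f g = Comp C f h \<longrightarrow> g = h)"

definition epi :: "('o,'m) acat \<Rightarrow> 'm \<Rightarrow> bool" where
  "epi C f \<longleftrightarrow> f \<in> Arr C \<and>
     (\<forall>t\<in>Obj C. \<forall>g\<in>hom C (Cod C f) t. \<forall>h\<in>hom C (Cod C f) t.
        Comp C g f = Comp C h f \<longrightarrow> g = h)"

definition abelian :: "('o,'m) acat \<Rightarrow> bool" where
  "abelian C \<longleftrightarrow> preadditive C \<and>
     (\<exists>z. zero_object C z) \<and>
     (\<forall>a\<in>Obj C. \<forall>b\<in>Obj C. \<exists>p i1 i2 p1 p2. is_biproduct C a b p i1 i2 p1 p2) \<and>
     (\<forall>f\<in>Arr C. \<exists>k. is_kernel C k f) \<and>
     (\<forall>f\<in>Arr C. \<exists>q. is_cokernel C q f) \<and>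
     (\<forall>f. mono C f \<longrightarrow> (\<exists>g. is_kernel C f g)) \<and>
     (\<forall>f. epi C f \<longrightarrow> (\<exists>g. is_cokernel C f g))"

definition iso :: "('o,'m) acat \<Rightarrow> 'm \<Rightarrow> bool" where
  "iso C f \<longleftrightarrow> f \<in> Arr C \<and>
     (\<exists>g\<in>hom C (Cod C f) (Dom C f).
        Comp C g f = Ident C (Dom C f) \<and> Comp C f g = Ident C (Cod C f))"

definition right_minimal :: "('o,'m) acat \<Rightarrow> 'm \<Rightarrow> bool" where
  "right_minimal C \<alpha> \<longleftrightarrow> \<alpha> \<in> Arr C \<and>
     (\<forall>u\<in>hom C (Dom C \<alpha>) (Dom C \<alpha>). Comp C \<alpha> u = \<alpha> \<longrightarrow> iso C u)"

text \<open>Short exact sequence 0 -> K -> X -> Y -> 0, given by the pair (i, alpha):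
 i is a kernel of alpha and alpha is a cokernel of i.\<close>
definition ses :: "('o,'m) acat \<Rightarrow> 'm \<times> 'm \<Rightarrow> bool" where
  "ses C \<xi> \<longleftrightarrow> (case \<xi> of (i, \<alpha>) \<Rightarrow> is_kernel C i \<alpha> \<and> is_cokernel C \<alpha> i)"

definition ker_obj :: "('o,'m) acat \<Rightarrow> 'm \<times> 'm \<Rightarrow> 'o" where
  "ker_obj C \<xi> = Dom C (fst \<xi>)"

definition end_obj :: "('o,'m) acat \<Rightarrow> 'm \<times> 'm \<Rightarrow> 'o" where
  "end_obj C \<xi> = Cod C (snd \<xi>)"

text \<open>Equivalence of extensions of Y by K (Yoneda): a morphism of short exact
 sequences which is the identity on K and on Y.\<close>
definition ext_equiv :: "('o,'m) acat \<Rightarrow> 'm \<times> 'm \<Rightarrow> 'm \<times> 'm \<Rightarrow> bool" where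
  "ext_equiv C \<xi> \<eta> \<longleftrightarrow> ses C \<xi> \<and> ses C \<eta> \<and>
     ker_obj C \<xi> = ker_obj C \<eta> \<and> end_obj C \<xi> = end_obj C \<eta> \<and>
     (\<exists>f\<in>hom C (Cod C (fst \<xi>)) (Cod C (fst \<eta>)).
        Comp C f (fst \<xi>) = fst \<eta> \<and> Comp C (snd \<eta>) f = snd \<xi>)"

definition ext_class :: "('o,'m) acat \<Rightarrow> 'm \<times> 'm \<Rightarrow> ('m \<times> 'm) set" where
  "ext_class C \<xi> = {\<eta>. ext_equiv C \<xi> \<eta>}"

definition is_pushout :: "('o,'m) acat \<Rightarrow> 'm \<Rightarrow> 'm \<Rightarrow> 'm \<Rightarrow> 'm \<Rightarrow> bool" where
  "is_pushout C i u f j \<longleftrightarrow> i \<in> Arr C \<and> u \<in> Arr C \<and> f \<in> Arr C \<and> j \<in> Arr C \<and>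
     Dom C i = Dom C u \<and> Dom C f = Cod C i \<and> Dom C j = Cod C u \<and> Cod C f = Cod C j \<and>
     Comp C f i = Comp C j u \<and>
     (\<forall>t\<in>Obj C. \<forall>g\<in>hom C (Cod C i) t. \<forall>h\<in>hom C (Cod C u) t.
        Comp C g i = Comp C h u \<longrightarrow>
        (\<exists>!p. p \<in> hom C (Cod C f) t \<and> Comp C p f = g \<and> Comp C p j = h))"

text \<open>eta is a (representative of the) pushout u.xi of xi along u : K -> K':
 eta = (j, beta) where (f, j) is a pushout of (i, u) and beta is the induced map
 with beta f = alpha and beta j = 0.\<close>
definition pushout_ext :: "('o,'m) acat \<Rightarrow> 'm \<Rightarrow> 'm \<times> 'm \<Rightarrow> 'm \<times> 'm \<Rightarrow> bool" where
  "pushout_ext C u \<xi> \<eta> \<longleftrightarrow>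
     (\<exists>f. is_pushout C (fst \<xi>) u f (fst \<eta>) \<and>
          snd \<eta> \<in> hom C (Cod C f) (Cod C (snd \<xi>)) \<and>
          Comp C (snd \<eta>) f = snd \<xi> \<and>
          Comp C (snd \<eta>) (fst \<eta>) = Zero C (Cod C u) (Cod C (snd \<xi>)))"

definition conn :: "('o,'m) acat \<Rightarrow> 'm \<times> 'm \<Rightarrow> 'm \<Rightarrow> ('m \<times> 'm) set" where
  "conn C \<xi> u = ext_class C (SOME \<eta>. pushout_ext C u \<xi> \<eta>)"

text \<open>Gamma(K)-linear endomorphisms of Hom(K,K), where Gamma(K) = End(K) acts on
 Hom(K,K) by composition (the module structure for which c(xi,K) is linear,
 since (gamma w).xi = gamma.(w.xi)).\<close>
definition Gamma_linear_endo :: "('o,'m) acat \<Rightarrow> 'o \<Rightarrow> ('m \<Rightarrow> 'm) \<Rightarrow> bool" where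
  "Gamma_linear_endo C K \<phi> \<longleftrightarrow>
     (\<forall>w\<in>hom C K K. \<phi> w \<in> hom C K K) \<and>
     (\<forall>w\<in>hom C K K. \<forall>w'\<in>hom C K K. \<phi> (Add C w w') = Add C (\<phi> w) (\<phi> w')) \<and>
     (\<forall>\<gamma>\<in>hom C K K. \<forall>w\<in>hom C K K. \<phi> (Comp C \<gamma> w) = Comp C \<gamma> (\<phi> w))"

definition conn_right_minimal :: "('o,'m) acat \<Rightarrow> 'm \<times> 'm \<Rightarrow> bool" where
  "conn_right_minimal C \<xi> \<longleftrightarrow>
     (\<forall>\<phi>. Gamma_linear_endo C (ker_obj C \<xi>) \<phi> \<and>
          (\<forall>w\<in>hom C (ker_obj C \<xi>) (ker_obj C \<xi>). conn C \<xi> (\<phi> w) = conn C \<xi> w) \<longrightarrow>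
          bij_betw \<phi> (hom C (ker_obj C \<xi>) (ker_obj C \<xi>)) (hom C (ker_obj C \<xi>) (ker_obj C \<xi>)))"

end

theory Submission
  imports Defs
begin

text \<open>
  An endomorphism \<open>u\<close> of \<open>K\<close> satisfies \<open>[u.\<xi>] = [\<xi>]\<close> exactly when it is the
  restriction of an endomorphism \<open>h\<close> of \<open>X\<close> over \<open>Y\<close> (\<open>\<alpha> h = \<alpha>\<close>, \<open>h i = i u\<close>): an
  equivalence \<open>u.\<xi> \<sim> \<xi>\<close> composed with the pushout map \<open>X \<rightarrow> E\<close> is such an \<open>h\<close>, and
  conversely the universal property of the pushout along \<open>w u\<close> turns \<open>h\<close> into an equivalence
  \<open>(w u).\<xi> \<sim> w.\<xi>\<close>. By the short five lemma \<open>h\<close> is an automorphism iff \<open>u\<close> is, which gives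
  (1) \<open>\<Longleftrightarrow>\<close> (2). A \<open>\<Gamma>(K)\<close>-linear endomorphism \<open>\<phi>\<close> of \<open>Hom(K,K)\<close> is right
  multiplication by \<open>u = \<phi>(1)\<close>; then \<open>c(\<xi>,K) \<circ> \<phi> = c(\<xi>,K)\<close> iff \<open>[u.\<xi>] = [\<xi>]\<close>, and \<open>\<phi>\<close> is
  bijective iff \<open>u\<close> is invertible, which gives (2) \<open>\<Longleftrightarrow>\<close> (3).
\<close>

locale cat =
  fixes C :: "('o,'m) acat"
  assumes category: "category C"
begin

abbreviation cmp (infixr "\<cdot>" 70) where "g \<cdot> f \<equiv> Comp C g f"

lemma homD: "f \<in> hom C a b \<Longrightarrow> f \<in> Arr C \<and> Dom C f = a \<and> Cod C f = b"
  unfolding hom_def by blast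

lemma hom_objs: "f \<in> hom C a b \<Longrightarrow> a \<in> Obj C \<and> b \<in> Obj C"
  using category unfolding category_def hom_def by blast

lemma comp_hom [intro]: "f \<in> hom C a b \<Longrightarrow> g \<in> hom C b c \<Longrightarrow> g \<cdot> f \<in> hom C a c"
  using category hom_objs[of f a b] hom_objs[of g b c] unfolding category_def by blast

lemma comp_assoc:
  "f \<in> hom C a b \<Longrightarrow> g \<in> hom C b c \<Longrightarrow> h \<in> hom C c d \<Longrightarrow> h \<cdot> (g \<cdot> f) = (h \<cdot> g) \<cdot> f"
  using category hom_objs[of f a b] hom_objs[of h c d] hom_objs[of g b c]
  unfolding category_def by blast

lemma id_hom [intro]: "a \<in> Obj C \<Longrightarrow> Ident C a \<in> hom C a a"
  using category unfolding category_def by blast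

lemma id_comp: "f \<in> hom C a b \<Longrightarrow> Ident C b \<cdot> f = f"
  using category unfolding category_def hom_def by blast

lemma comp_id: "f \<in> hom C a b \<Longrightarrow> f \<cdot> Ident C a = f"
  using category unfolding category_def hom_def by blast

lemma isoI:
  "u \<in> hom C a b \<Longrightarrow> v \<in> hom C b a \<Longrightarrow> v \<cdot> u = Ident C a \<Longrightarrow> u \<cdot> v = Ident C b \<Longrightarrow> iso C u"
  unfolding iso_def hom_def by auto

lemma isoE:
  assumes "iso C u" "u \<in> hom C a b"
  obtains v where "v \<in> hom C b a" "v \<cdot> u = Ident C a" "u \<cdot> v = Ident C b"
  using assms unfolding iso_def hom_def by auto

lemma iso_mono: assumes "iso C u" "u \<in> hom C a b" shows "mono C u"
  unfolding mono_def
proof (intro conjI ballI impI)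
  show "u \<in> Arr C" using homD[OF assms(2)] by blast
  obtain v where v: "v \<in> hom C b a" "v \<cdot> u = Ident C a" using isoE[OF assms] by blast
  fix t g h assume "g \<in> hom C t (Dom C u)" "h \<in> hom C t (Dom C u)" "u \<cdot> g = u \<cdot> h"
  then show "g = h" using comp_assoc[OF _ assms(2) v(1)] v(2) id_comp homD[OF assms(2)] by metis
qed

lemma iso_epi: assumes "iso C u" "u \<in> hom C a b" shows "epi C u"
  unfolding epi_def
proof (intro conjI ballI impI)
  show "u \<in> Arr C" using homD[OF assms(2)] by blast
  obtain v where v: "v \<in> hom C b a" "u \<cdot> v = Ident C b" using isoE[OF assms] by blast
  fix t g h assume "g \<in> hom C (Cod C u) t" "h \<in> hom C (Cod C u) t" "g \<cdot> u = h \<cdot> u"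
  then show "g = h" using comp_assoc[OF v(1) assms(2)] v(2) comp_id homD[OF assms(2)] by metis
qed

lemma mono_cancel:
  "mono C f \<Longrightarrow> f \<in> hom C a b \<Longrightarrow> g \<in> hom C t a \<Longrightarrow> h \<in> hom C t a \<Longrightarrow> f \<cdot> g = f \<cdot> h \<Longrightarrow> g = h"
  unfolding mono_def using homD[of f a b] hom_objs[of g t a] by blast

lemma epi_cancel:
  "epi C f \<Longrightarrow> f \<in> hom C a b \<Longrightarrow> g \<in> hom C b t \<Longrightarrow> h \<in> hom C b t \<Longrightarrow> g \<cdot> f = h \<cdot> f \<Longrightarrow> g = h"
  unfolding epi_def using homD[of f a b] hom_objs[of g b t] by blast

lemma bij_comp_right_iff_iso:
  assumes u: "u \<in> hom C a a"
  shows "bij_betw (\<lambda>w. w \<cdot> u) (hom C a a) (hom C a a) \<longleftrightarrow> iso C u"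
proof
  assume bij: "bij_betw (\<lambda>w. w \<cdot> u) (hom C a a) (hom C a a)"
  have ida: "Ident C a \<in> hom C a a" using hom_objs[OF u] by blast
  then obtain v where v: "v \<in> hom C a a" "v \<cdot> u = Ident C a"
    using bij unfolding bij_betw_def by (metis imageE)
  have "(u \<cdot> v) \<cdot> u = Ident C a \<cdot> u"
    using comp_assoc[OF u v(1) u] v(2) comp_id[OF u] id_comp[OF u] by simp
  then have "u \<cdot> v = Ident C a"
    using bij comp_hom[OF v(1) u] ida unfolding bij_betw_def inj_on_def by blast
  then show "iso C u" using isoI[OF u v(1) v(2)] by simp
next
  assume "iso C u"
  then obtain v where v: "v \<in> hom C a a" "v \<cdot> u = Ident C a" "u \<cdot> v = Ident C a"
    using isoE[OF _ u] by blast
  have cancel: "(w \<cdot> u) \<cdot> v = w" if "w \<in> hom C a a" for w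
    using comp_assoc[OF v(1) u that] v(3) comp_id[OF that] by simp
  show "bij_betw (\<lambda>w. w \<cdot> u) (hom C a a) (hom C a a)"
  proof (rule bij_betw_byWitness[where f' = "\<lambda>w. w \<cdot> v"])
    show "\<forall>w\<in>hom C a a. (w \<cdot> u) \<cdot> v = w" using cancel by blast
    show "\<forall>w\<in>hom C a a. (w \<cdot> v) \<cdot> u = w"
      using comp_assoc[OF u v(1)] v(2) comp_id by simp
  qed (use u v(1) in auto)
qed

lemma kernelD:
  assumes "is_kernel C k f"
  shows "k \<in> hom C (Dom C k) (Dom C f)" "f \<in> hom C (Dom C f) (Cod C f)"
    "f \<cdot> k = Zero C (Dom C k) (Cod C f)"
  using assms unfolding is_kernel_def hom_def by (elim conjE; simp)+

lemma kernel_univ: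
  assumes "is_kernel C k f" "g \<in> hom C t (Dom C f)" "f \<cdot> g = Zero C t (Cod C f)"
  shows "\<exists>!h. h \<in> hom C t (Dom C k) \<and> k \<cdot> h = g"
proof -
  have "t \<in> Obj C" using hom_objs[OF assms(2)] by blast
  moreover have "\<forall>t\<in>Obj C. \<forall>g\<in>hom C t (Dom C f). f \<cdot> g = Zero C t (Cod C f) \<longrightarrow>
      (\<exists>!h. h \<in> hom C t (Dom C k) \<and> k \<cdot> h = g)"
    using assms(1) unfolding is_kernel_def by (elim conjE)
  ultimately show ?thesis using assms(2,3) by blast
qed

lemma kernel_factor:
  assumes "is_kernel C k f" "g \<in> hom C t (Dom C f)" "f \<cdot> g = Zero C t (Cod C f)"
  obtains h where "h \<in> hom C t (Dom C k)" "k \<cdot> h = g"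
  using kernel_univ[OF assms] by blast

lemma cokernelD:
  assumes "is_cokernel C q f"
  shows "q \<in> hom C (Cod C f) (Cod C q)" "f \<in> hom C (Dom C f) (Cod C f)"
    "q \<cdot> f = Zero C (Dom C f) (Cod C q)"
  using assms unfolding is_cokernel_def hom_def by (elim conjE; simp)+

lemma cokernel_univ:
  assumes "is_cokernel C q f" "g \<in> hom C (Cod C f) t" "g \<cdot> f = Zero C (Dom C f) t"
  shows "\<exists>!h. h \<in> hom C (Cod C q) t \<and> h \<cdot> q = g"
proof -
  have "t \<in> Obj C" using hom_objs[OF assms(2)] by blast
  moreover have "\<forall>t\<in>Obj C. \<forall>g\<in>hom C (Cod C f) t. g \<cdot> f = Zero C (Dom C f) t \<longrightarrow>
      (\<exists>!h. h \<in> hom C (Cod C q) t \<and> h \<cdot> q = g)"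
    using assms(1) unfolding is_cokernel_def by (elim conjE)
  ultimately show ?thesis using assms(2,3) by blast
qed

lemma cokernel_factor:
  assumes "is_cokernel C q f" "g \<in> hom C (Cod C f) t" "g \<cdot> f = Zero C (Dom C f) t"
  obtains h where "h \<in> hom C (Cod C q) t" "h \<cdot> q = g"
  using cokernel_univ[OF assms] by blast

lemma sesD:
  assumes "ses C (i, \<alpha>)"
  shows "is_kernel C i \<alpha>" "is_cokernel C \<alpha> i"
    "i \<in> hom C (Dom C i) (Cod C i)" "\<alpha> \<in> hom C (Cod C i) (Cod C \<alpha>)"
    "\<alpha> \<cdot> i = Zero C (Dom C i) (Cod C \<alpha>)"
proof -
  show k: "is_kernel C i \<alpha>" and "is_cokernel C \<alpha> i" using assms unfolding ses_def by simp_all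
  have "Dom C \<alpha> = Cod C i" using homD[OF kernelD(1)[OF k]] by simp
  then show "i \<in> hom C (Dom C i) (Cod C i)" "\<alpha> \<in> hom C (Cod C i) (Cod C \<alpha>)"
    "\<alpha> \<cdot> i = Zero C (Dom C i) (Cod C \<alpha>)" using kernelD[OF k] by simp_all
qed

lemma pushoutD:
  assumes "is_pushout C i u f j"
  shows "i \<in> hom C (Dom C i) (Cod C i)" "u \<in> hom C (Dom C i) (Cod C u)"
    "f \<in> hom C (Cod C i) (Cod C f)" "j \<in> hom C (Cod C u) (Cod C f)" "f \<cdot> i = j \<cdot> u"
  using assms unfolding is_pushout_def hom_def by (elim conjE; simp)+

lemma pushout_univ:
  assumes "is_pushout C i u f j" "g \<in> hom C (Cod C i) t" "h \<in> hom C (Cod C u) t"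
    "g \<cdot> i = h \<cdot> u"
  shows "\<exists>!p. p \<in> hom C (Cod C f) t \<and> p \<cdot> f = g \<and> p \<cdot> j = h"
proof -
  have "t \<in> Obj C" using hom_objs[OF assms(2)] by blast
  moreover have "\<forall>t\<in>Obj C. \<forall>g\<in>hom C (Cod C i) t. \<forall>h\<in>hom C (Cod C u) t. g \<cdot> i = h \<cdot> u \<longrightarrow>
      (\<exists>!p. p \<in> hom C (Cod C f) t \<and> p \<cdot> f = g \<and> p \<cdot> j = h)"
    using assms(1) unfolding is_pushout_def by (elim conjE)
  ultimately show ?thesis using assms(2-4) by blast
qed

lemma pushout_arr_eqI:
  assumes P: "is_pushout C i u f j" and r: "r \<in> hom C (Cod C f) t" and r': "r' \<in> hom C (Cod C f) t"
    and "r \<cdot> f = r' \<cdot> f" "r \<cdot> j = r' \<cdot> j"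
  shows "r = r'"
proof -
  note D = pushoutD[OF P]
  have "(r \<cdot> f) \<cdot> i = (r \<cdot> j) \<cdot> u"
    using comp_assoc[OF D(1) D(3) r] comp_assoc[OF D(2) D(4) r] D(5) by simp
  from pushout_univ[OF P comp_hom[OF D(3) r] comp_hom[OF D(4) r] this] r r' assms(4,5)
  show ?thesis by (metis (no_types, lifting))
qed

end

locale preadditive_cat =
  fixes C :: "('o,'m) acat"
  assumes preadditive: "preadditive C"

sublocale preadditive_cat \<subseteq> cat
  using preadditive unfolding preadditive_def by unfold_locales blast

context preadditive_cat
begin

abbreviation add (infixl "\<oplus>" 65) where "f \<oplus> g \<equiv> Add C f g"

lemma zero_hom [intro]: "a \<in> Obj C \<Longrightarrow> b \<in> Obj C \<Longrightarrow> Zero C a b \<in> hom C a b"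
  using preadditive unfolding preadditive_def by blast

lemma add_hom [intro]: "f \<in> hom C a b \<Longrightarrow> g \<in> hom C a b \<Longrightarrow> f \<oplus> g \<in> hom C a b"
  using preadditive hom_objs[of f a b] unfolding preadditive_def by blast

lemma add_commute: "f \<in> hom C a b \<Longrightarrow> g \<in> hom C a b \<Longrightarrow> f \<oplus> g = g \<oplus> f"
  using preadditive hom_objs[of f a b] unfolding preadditive_def by blast

lemma add_assoc:
  "f \<in> hom C a b \<Longrightarrow> g \<in> hom C a b \<Longrightarrow> h \<in> hom C a b \<Longrightarrow> (f \<oplus> g) \<oplus> h = f \<oplus> (g \<oplus> h)"
  using preadditive hom_objs[of f a b] unfolding preadditive_def by blast

lemma add_zero: "f \<in> hom C a b \<Longrightarrow> f \<oplus> Zero C a b = f"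
  using preadditive hom_objs[of f a b] unfolding preadditive_def by blast

lemma zero_add: assumes "f \<in> hom C a b" shows "Zero C a b \<oplus> f = f"
proof -
  have "Zero C a b \<in> hom C a b" using hom_objs[OF assms] by blast
  then show ?thesis using add_commute[OF assms] add_zero[OF assms] by simp
qed

lemma comp_add:
  assumes "f \<in> hom C a b" "f' \<in> hom C a b" "g \<in> hom C b c"
  shows "g \<cdot> (f \<oplus> f') = g \<cdot> f \<oplus> g \<cdot> f'"
proof -
  have "a \<in> Obj C" "b \<in> Obj C" "c \<in> Obj C" using hom_objs assms by blast+
  with preadditive assms show ?thesis unfolding preadditive_def by (elim conjE) blast
qed

lemma add_comp:
  assumes "f \<in> hom C a b" "g \<in> hom C b c" "g' \<in> hom C b c"
  shows "(g \<oplus> g') \<cdot> f = g \<cdot> f \<oplus> g' \<cdot> f"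
proof -
  have "a \<in> Obj C" "b \<in> Obj C" "c \<in> Obj C" using hom_objs assms by blast+
  with preadditive assms show ?thesis unfolding preadditive_def by (elim conjE) blast
qed

definition neg :: "'m \<Rightarrow> 'm" where
  "neg f = (SOME g. g \<in> hom C (Dom C f) (Cod C f) \<and> f \<oplus> g = Zero C (Dom C f) (Cod C f))"

lemma neg: assumes f: "f \<in> hom C a b" shows "neg f \<in> hom C a b" "f \<oplus> neg f = Zero C a b"
proof -
  have "a \<in> Obj C" "b \<in> Obj C" using hom_objs[OF f] by auto
  then have "\<exists>g\<in>hom C a b. f \<oplus> g = Zero C a b"
    using preadditive f unfolding preadditive_def by (elim conjE) blast
  moreover have "Dom C f = a" "Cod C f = b" using homD[OF f] by auto
  ultimately have "neg f \<in> hom C a b \<and> f \<oplus> neg f = Zero C a b"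
    unfolding neg_def by (metis (mono_tags, lifting) someI_ex)
  then show "neg f \<in> hom C a b" "f \<oplus> neg f = Zero C a b" by auto
qed

lemma add_left_cancel:
  assumes f: "f \<in> hom C a b" and g: "g \<in> hom C a b" and g': "g' \<in> hom C a b"
    and "f \<oplus> g = f \<oplus> g'"
  shows "g = g'"
proof -
  have nf: "neg f \<oplus> f = Zero C a b" using neg[OF f] add_commute[OF f] by simp
  have "g = (neg f \<oplus> f) \<oplus> g" using nf zero_add[OF g] by simp
  also have "\<dots> = (neg f \<oplus> f) \<oplus> g'" using add_assoc neg[OF f] f g g' assms(4) by simp
  also have "\<dots> = g'" using nf zero_add[OF g'] by simp
  finally show ?thesis .
qed

lemma add_neg_eq_zero_iff:
  assumes f: "f \<in> hom C a b" and g: "g \<in> hom C a b"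
  shows "f \<oplus> neg g = Zero C a b \<longleftrightarrow> f = g"
proof
  assume "f \<oplus> neg g = Zero C a b"
  then have "neg g \<oplus> f = neg g \<oplus> g" using neg[OF g] add_commute[OF neg(1)[OF g]] f g by simp
  then show "f = g" using add_left_cancel[OF neg(1)[OF g] f g] by blast
qed (use neg[OF g] in simp)

lemma zero_comp: assumes f: "f \<in> hom C a b" and c: "c \<in> Obj C" shows "Zero C b c \<cdot> f = Zero C a c"
proof -
  have z: "Zero C b c \<in> hom C b c" using hom_objs[OF f] c by blast
  have "Zero C b c \<cdot> f \<oplus> Zero C b c \<cdot> f = Zero C b c \<cdot> f \<oplus> Zero C a c"
    using add_comp[OF f z z] add_zero[OF z] add_zero[OF comp_hom[OF f z]] by simp
  moreover have "Zero C a c \<in> hom C a c" using hom_objs[OF f] c by blast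
  ultimately show ?thesis using add_left_cancel[OF comp_hom[OF f z] comp_hom[OF f z]] by blast
qed

lemma comp_zero: assumes f: "f \<in> hom C b c" and a: "a \<in> Obj C" shows "f \<cdot> Zero C a b = Zero C a c"
proof -
  have z: "Zero C a b \<in> hom C a b" using hom_objs[OF f] a by blast
  have "f \<cdot> Zero C a b \<oplus> f \<cdot> Zero C a b = f \<cdot> Zero C a b \<oplus> Zero C a c"
    using comp_add[OF z z f] add_zero[OF z] add_zero[OF comp_hom[OF z f]] by simp
  moreover have "Zero C a c \<in> hom C a c" using hom_objs[OF f] a by blast
  ultimately show ?thesis using add_left_cancel[OF comp_hom[OF z f] comp_hom[OF z f]] by blast
qed

lemma comp_neg: assumes f: "f \<in> hom C a b" and h: "h \<in> hom C b c" shows "h \<cdot> neg f = neg (h \<cdot> f)"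
proof -
  have "h \<cdot> f \<oplus> h \<cdot> neg f = Zero C a c"
    using comp_add[OF f neg(1)[OF f] h] neg(2)[OF f] comp_zero[OF h] hom_objs[OF f] by simp
  then show ?thesis
    using add_left_cancel[OF comp_hom[OF f h] comp_hom[OF neg(1)[OF f] h] neg(1)[OF comp_hom[OF f h]]]
      neg(2)[OF comp_hom[OF f h]] by simp
qed

lemma neg_comp: assumes f: "f \<in> hom C b c" and h: "h \<in> hom C a b" shows "neg f \<cdot> h = neg (f \<cdot> h)"
proof -
  have "f \<cdot> h \<oplus> neg f \<cdot> h = Zero C a c"
    using add_comp[OF h f neg(1)[OF f]] neg(2)[OF f] zero_comp[OF h] hom_objs[OF f] by simp
  then show ?thesis
    using add_left_cancel[OF comp_hom[OF h f] comp_hom[OF h neg(1)[OF f]] neg(1)[OF comp_hom[OF h f]]]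
      neg(2)[OF comp_hom[OF h f]] by simp
qed

lemma monoI_zero:
  assumes f: "f \<in> hom C a b"
    and zero: "\<And>t g. g \<in> hom C t a \<Longrightarrow> f \<cdot> g = Zero C t b \<Longrightarrow> g = Zero C t a"
  shows "mono C f"
  unfolding mono_def
proof (intro conjI ballI impI)
  show "f \<in> Arr C" using homD[OF f] by blast
  fix t g h assume g: "g \<in> hom C t (Dom C f)" and h: "h \<in> hom C t (Dom C f)"
    and e: "f \<cdot> g = f \<cdot> h"
  have g': "g \<in> hom C t a" and h': "h \<in> hom C t a" using g h homD[OF f] by auto
  have "f \<cdot> (g \<oplus> neg h) = f \<cdot> h \<oplus> neg (f \<cdot> h)"
    using comp_add[OF g' neg(1)[OF h'] f] e comp_neg[OF h' f] by simp
  then have "f \<cdot> (g \<oplus> neg h) = Zero C t b" using neg(2) comp_hom[OF h' f] by simp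
  then have "g \<oplus> neg h = Zero C t a" using zero neg(1)[OF h'] g' by blast
  then show "g = h" using add_neg_eq_zero_iff[OF g' h'] by blast
qed

lemma epiI_zero:
  assumes f: "f \<in> hom C a b"
    and zero: "\<And>t g. g \<in> hom C b t \<Longrightarrow> g \<cdot> f = Zero C a t \<Longrightarrow> g = Zero C b t"
  shows "epi C f"
  unfolding epi_def
proof (intro conjI ballI impI)
  show "f \<in> Arr C" using homD[OF f] by blast
  fix t g h assume g: "g \<in> hom C (Cod C f) t" and h: "h \<in> hom C (Cod C f) t"
    and e: "g \<cdot> f = h \<cdot> f"
  have g': "g \<in> hom C b t" and h': "h \<in> hom C b t" using g h homD[OF f] by auto
  have "(g \<oplus> neg h) \<cdot> f = h \<cdot> f \<oplus> neg (h \<cdot> f)"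
    using add_comp[OF f g' neg(1)[OF h']] e neg_comp[OF h' f] by simp
  then have "(g \<oplus> neg h) \<cdot> f = Zero C a t" using neg(2) comp_hom[OF f h'] by simp
  then have "g \<oplus> neg h = Zero C b t" using zero neg(1)[OF h'] g' by blast
  then show "g = h" using add_neg_eq_zero_iff[OF g' h'] by blast
qed

lemma kernel_mono: assumes "is_kernel C k f" shows "mono C k"
proof -
  note K = kernelD[OF assms]
  show ?thesis unfolding mono_def
  proof (intro conjI ballI impI)
    show "k \<in> Arr C" using homD[OF K(1)] by blast
    fix t g h assume g: "g \<in> hom C t (Dom C k)" and h: "h \<in> hom C t (Dom C k)" and e: "k \<cdot> g = k \<cdot> h"
    have "f \<cdot> (k \<cdot> g) = Zero C t (Cod C f)"
      using comp_assoc[OF g K(1) K(2)] K(3) zero_comp[OF g] hom_objs[OF K(2)] by simp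
    from kernel_univ[OF assms comp_hom[OF g K(1)] this] show "g = h" using g h e by auto
  qed
qed

lemma cokernel_epi: assumes "is_cokernel C q f" shows "epi C q"
proof -
  note Q = cokernelD[OF assms]
  show ?thesis unfolding epi_def
  proof (intro conjI ballI impI)
    show "q \<in> Arr C" using homD[OF Q(1)] by blast
    fix t g h assume g: "g \<in> hom C (Cod C q) t" and h: "h \<in> hom C (Cod C q) t" and e: "g \<cdot> q = h \<cdot> q"
    have "(g \<cdot> q) \<cdot> f = Zero C (Dom C f) t"
      using comp_assoc[OF Q(2) Q(1) g] Q(3) comp_zero[OF g] hom_objs[OF Q(2)] by simp
    from cokernel_univ[OF assms comp_hom[OF Q(1) g] this] show "g = h" using g h e by auto
  qed
qed

lemma biproductD:
  assumes "is_biproduct C a b p i1 i2 p1 p2"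
  shows "i1 \<in> hom C a p" "i2 \<in> hom C b p" "p1 \<in> hom C p a" "p2 \<in> hom C p b"
    "p1 \<cdot> i1 = Ident C a" "p2 \<cdot> i2 = Ident C b" "p1 \<cdot> i2 = Zero C b a" "p2 \<cdot> i1 = Zero C a b"
    "i1 \<cdot> p1 \<oplus> i2 \<cdot> p2 = Ident C p"
  using assms unfolding is_biproduct_def by auto

lemma biproduct_fst_pair:
  assumes B: "is_biproduct C a b p i1 i2 p1 p2" and x: "x \<in> hom C t a" and y: "y \<in> hom C t b"
  shows "p1 \<cdot> (i1 \<cdot> x \<oplus> i2 \<cdot> y) = x"
proof -
  note D = biproductD[OF B]
  have "p1 \<cdot> (i1 \<cdot> x \<oplus> i2 \<cdot> y) = (p1 \<cdot> i1) \<cdot> x \<oplus> (p1 \<cdot> i2) \<cdot> y"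
    using comp_add[OF comp_hom[OF x D(1)] comp_hom[OF y D(2)] D(3)]
      comp_assoc[OF x D(1) D(3)] comp_assoc[OF y D(2) D(3)] by simp
  also have "\<dots> = x" using D(5,7) id_comp[OF x] zero_comp[OF y] add_zero[OF x] hom_objs[OF x] by simp
  finally show ?thesis .
qed

lemma biproduct_copair_fst:
  assumes B: "is_biproduct C a b p i1 i2 p1 p2" and g: "g \<in> hom C a t" and h: "h \<in> hom C b t"
  shows "(g \<cdot> p1 \<oplus> h \<cdot> p2) \<cdot> i1 = g"
proof -
  note D = biproductD[OF B]
  have "(g \<cdot> p1 \<oplus> h \<cdot> p2) \<cdot> i1 = g \<cdot> (p1 \<cdot> i1) \<oplus> h \<cdot> (p2 \<cdot> i1)"
    using add_comp[OF D(1) comp_hom[OF D(3) g] comp_hom[OF D(4) h]]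
      comp_assoc[OF D(1) D(3) g] comp_assoc[OF D(1) D(4) h] by simp
  also have "\<dots> = g" using D(5,8) comp_id[OF g] comp_zero[OF h] add_zero[OF g] hom_objs[OF g] by simp
  finally show ?thesis .
qed

lemma biproduct_copair_snd:
  assumes B: "is_biproduct C a b p i1 i2 p1 p2" and g: "g \<in> hom C a t" and h: "h \<in> hom C b t"
  shows "(g \<cdot> p1 \<oplus> h \<cdot> p2) \<cdot> i2 = h"
proof -
  note D = biproductD[OF B]
  have "(g \<cdot> p1 \<oplus> h \<cdot> p2) \<cdot> i2 = g \<cdot> (p1 \<cdot> i2) \<oplus> h \<cdot> (p2 \<cdot> i2)"
    using add_comp[OF D(2) comp_hom[OF D(3) g] comp_hom[OF D(4) h]]
      comp_assoc[OF D(2) D(3) g] comp_assoc[OF D(2) D(4) h] by simp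
  also have "\<dots> = h" using D(6,7) comp_id[OF h] comp_zero[OF g] zero_add[OF h] hom_objs[OF h] by simp
  finally show ?thesis .
qed

lemma biproduct_copair_eta:
  assumes B: "is_biproduct C a b p i1 i2 p1 p2" and z: "z \<in> hom C p t"
  shows "(z \<cdot> i1) \<cdot> p1 \<oplus> (z \<cdot> i2) \<cdot> p2 = z"
proof -
  note D = biproductD[OF B]
  have "z = z \<cdot> (i1 \<cdot> p1 \<oplus> i2 \<cdot> p2)" using D(9) comp_id[OF z] by simp
  also have "\<dots> = (z \<cdot> i1) \<cdot> p1 \<oplus> (z \<cdot> i2) \<cdot> p2"
    using comp_add[OF comp_hom[OF D(3) D(1)] comp_hom[OF D(4) D(2)] z]
      comp_assoc[OF D(3) D(1) z] comp_assoc[OF D(4) D(2) z] by simp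
  finally show ?thesis by simp
qed

lemma comp_biproduct_diff_eq_zero_iff:
  assumes B: "is_biproduct C X K' P i1 i2 p1 p2"
    and i: "i \<in> hom C K X" and u: "u \<in> hom C K K'" and g: "g \<in> hom C P t"
  shows "g \<cdot> (i1 \<cdot> i \<oplus> i2 \<cdot> neg u) = Zero C K t \<longleftrightarrow> (g \<cdot> i1) \<cdot> i = (g \<cdot> i2) \<cdot> u"
proof -
  note D = biproductD[OF B]
  have gi1: "g \<cdot> i1 \<in> hom C X t" and gi2: "g \<cdot> i2 \<in> hom C K' t" using D g by blast+
  have "g \<cdot> (i1 \<cdot> i \<oplus> i2 \<cdot> neg u) = (g \<cdot> i1) \<cdot> i \<oplus> neg ((g \<cdot> i2) \<cdot> u)"
    using comp_add[OF comp_hom[OF i D(1)] comp_hom[OF neg(1)[OF u] D(2)] g]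
      comp_assoc[OF i D(1) g] comp_assoc[OF neg(1)[OF u] D(2) g] comp_neg[OF u gi2] by simp
  then show ?thesis using add_neg_eq_zero_iff[OF comp_hom[OF i gi1] comp_hom[OF u gi2]] by simp
qed

lemma biproduct_diff_mono:
  assumes B: "is_biproduct C X K' P i1 i2 p1 p2"
    and i: "i \<in> hom C K X" and u: "u \<in> hom C K K'" and mono_i: "mono C i"
  shows "mono C (i1 \<cdot> i \<oplus> i2 \<cdot> neg u)"
proof -
  note D = biproductD[OF B]
  have m: "i1 \<cdot> i \<oplus> i2 \<cdot> neg u \<in> hom C K P"
    using add_hom[OF comp_hom[OF i D(1)] comp_hom[OF neg(1)[OF u] D(2)]] .
  show ?thesis
  proof (rule monoI_zero[OF m])
    fix t b assume b: "b \<in> hom C t K" and "(i1 \<cdot> i \<oplus> i2 \<cdot> neg u) \<cdot> b = Zero C t P"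
    then have "i \<cdot> b = i \<cdot> Zero C t K"
      using comp_assoc[OF b m D(3)] biproduct_fst_pair[OF B i neg(1)[OF u]]
        comp_zero[OF D(3)] comp_zero[OF i] hom_objs[OF b] by simp
    then show "b = Zero C t K" using mono_cancel[OF mono_i i b] hom_objs[OF b] hom_objs[OF i] by blast
  qed
qed

lemma pushout_is_cokernel:
  assumes P: "is_pushout C i u f j" and B: "is_biproduct C X K' P i1 i2 p1 p2"
    and i: "i \<in> hom C K X" and u: "u \<in> hom C K K'"
  shows "is_cokernel C (f \<cdot> p1 \<oplus> j \<cdot> p2) (i1 \<cdot> i \<oplus> i2 \<cdot> neg u)"
proof -
  note D = biproductD[OF B] and PD = pushoutD[OF P]
  define m where "m = i1 \<cdot> i \<oplus> i2 \<cdot> neg u"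
  define c where "c = f \<cdot> p1 \<oplus> j \<cdot> p2"
  obtain E where f: "f \<in> hom C X E" and j: "j \<in> hom C K' E"
    using PD(3,4) homD[OF i] homD[OF u] by auto
  have m: "m \<in> hom C K P"
    unfolding m_def using add_hom[OF comp_hom[OF i D(1)] comp_hom[OF neg(1)[OF u] D(2)]] .
  have c: "c \<in> hom C P E" unfolding c_def using add_hom[OF comp_hom[OF D(3) f] comp_hom[OF D(4) j]] .
  have ci1: "c \<cdot> i1 = f" and ci2: "c \<cdot> i2 = j"
    unfolding c_def using biproduct_copair_fst[OF B f j] biproduct_copair_snd[OF B f j] .
  have mz: "g \<cdot> m = Zero C K t \<longleftrightarrow> (g \<cdot> i1) \<cdot> i = (g \<cdot> i2) \<cdot> u" if "g \<in> hom C P t" for g t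
    unfolding m_def using comp_biproduct_diff_eq_zero_iff[OF B i u that] .
  have "is_cokernel C c m" unfolding is_cokernel_def
  proof (intro conjI ballI impI)
    show "m \<in> Arr C" "c \<in> Arr C" "Dom C c = Cod C m" using homD[OF m] homD[OF c] by simp_all
    show "c \<cdot> m = Zero C (Dom C m) (Cod C c)" using mz[OF c] ci1 ci2 PD(5) homD[OF m] homD[OF c] by simp
    fix t g assume "g \<in> hom C (Cod C m) t" and "g \<cdot> m = Zero C (Dom C m) t"
    then have g: "g \<in> hom C P t" and sq: "(g \<cdot> i1) \<cdot> i = (g \<cdot> i2) \<cdot> u" using mz homD[OF m] by auto
    have "g \<cdot> i1 \<in> hom C (Cod C i) t" "g \<cdot> i2 \<in> hom C (Cod C u) t"
      using comp_hom[OF D(1) g] comp_hom[OF D(2) g] homD[OF i] homD[OF u] by simp_all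
    from pushout_univ[OF P this sq]
    have ex1: "\<exists>!r. r \<in> hom C E t \<and> r \<cdot> f = g \<cdot> i1 \<and> r \<cdot> j = g \<cdot> i2" using homD[OF f] by simp
    have "r \<cdot> c = g \<longleftrightarrow> r \<cdot> f = g \<cdot> i1 \<and> r \<cdot> j = g \<cdot> i2" if r: "r \<in> hom C E t" for r
    proof -
      have "(r \<cdot> c) \<cdot> i1 = r \<cdot> f" "(r \<cdot> c) \<cdot> i2 = r \<cdot> j"
        using comp_assoc[OF D(1) c r] comp_assoc[OF D(2) c r] ci1 ci2 by simp_all
      then show ?thesis
        using biproduct_copair_eta[OF B g] biproduct_copair_eta[OF B comp_hom[OF c r]] by metis
    qed
    with ex1 show "\<exists>!r. r \<in> hom C (Cod C c) t \<and> r \<cdot> c = g" using homD[OF c] by auto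
  qed
  then show ?thesis unfolding m_def c_def .
qed

lemma cokernel_is_pushout:
  assumes B: "is_biproduct C X K' P i1 i2 p1 p2" and i: "i \<in> hom C K X" and u: "u \<in> hom C K K'"
    and q: "is_cokernel C q (i1 \<cdot> i \<oplus> i2 \<cdot> neg u)"
  shows "is_pushout C i u (q \<cdot> i1) (q \<cdot> i2)"
proof -
  note D = biproductD[OF B] and Q = cokernelD[OF q]
  define m where "m = i1 \<cdot> i \<oplus> i2 \<cdot> neg u"
  have m: "m \<in> hom C K P"
    unfolding m_def using add_hom[OF comp_hom[OF i D(1)] comp_hom[OF neg(1)[OF u] D(2)]] .
  obtain E where qE: "q \<in> hom C P E" using Q(1) homD[OF m] m_def by auto
  have mz: "g \<cdot> m = Zero C K t \<longleftrightarrow> (g \<cdot> i1) \<cdot> i = (g \<cdot> i2) \<cdot> u" if "g \<in> hom C P t" for g t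
    unfolding m_def using comp_biproduct_diff_eq_zero_iff[OF B i u that] .
  have sq: "(q \<cdot> i1) \<cdot> i = (q \<cdot> i2) \<cdot> u" using mz[OF qE] Q(3) homD[OF m] homD[OF qE] m_def by simp
  show ?thesis unfolding is_pushout_def
  proof (intro conjI ballI impI)
    show "i \<in> Arr C" "u \<in> Arr C" "q \<cdot> i1 \<in> Arr C" "q \<cdot> i2 \<in> Arr C" "Dom C i = Dom C u"
      "Dom C (q \<cdot> i1) = Cod C i" "Dom C (q \<cdot> i2) = Cod C u" "Cod C (q \<cdot> i1) = Cod C (q \<cdot> i2)"
      using homD[OF i] homD[OF u] homD[OF comp_hom[OF D(1) qE]] homD[OF comp_hom[OF D(2) qE]] by simp_all
    show "(q \<cdot> i1) \<cdot> i = (q \<cdot> i2) \<cdot> u" using sq .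
    fix t g h assume "g \<in> hom C (Cod C i) t" "h \<in> hom C (Cod C u) t" and gh: "g \<cdot> i = h \<cdot> u"
    then have g: "g \<in> hom C X t" and h: "h \<in> hom C K' t" using homD[OF i] homD[OF u] by auto
    define w where "w = g \<cdot> p1 \<oplus> h \<cdot> p2"
    have w: "w \<in> hom C P t" unfolding w_def using add_hom[OF comp_hom[OF D(3) g] comp_hom[OF D(4) h]] .
    have wi1: "w \<cdot> i1 = g" and wi2: "w \<cdot> i2 = h"
      unfolding w_def using biproduct_copair_fst[OF B g h] biproduct_copair_snd[OF B g h] .
    have "w \<cdot> m = Zero C (Dom C m) t" using mz[OF w] wi1 wi2 gh homD[OF m] by simp
    then have ex1: "\<exists>!r. r \<in> hom C E t \<and> r \<cdot> q = w"
      using cokernel_univ[OF q[folded m_def]] w homD[OF m] homD[OF qE] by auto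
    have "r \<cdot> q = w \<longleftrightarrow> r \<cdot> (q \<cdot> i1) = g \<and> r \<cdot> (q \<cdot> i2) = h" if r: "r \<in> hom C E t" for r
      using biproduct_copair_eta[OF B comp_hom[OF qE r]] wi1 wi2 w_def
        comp_assoc[OF D(1) qE r] comp_assoc[OF D(2) qE r] by auto
    with ex1 show "\<exists>!r. r \<in> hom C (Cod C (q \<cdot> i1)) t \<and> r \<cdot> (q \<cdot> i1) = g \<and> r \<cdot> (q \<cdot> i2) = h"
      using homD[OF comp_hom[OF D(1) qE]] by auto
  qed
qed

lemma pushout_cokernel:
  assumes P: "is_pushout C i u f j" and q: "is_cokernel C \<alpha> i"
    and \<beta>: "\<beta> \<in> hom C (Cod C f) Y" and \<beta>f: "\<beta> \<cdot> f = \<alpha>" and \<beta>j: "\<beta> \<cdot> j = Zero C (Cod C u) Y"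
  shows "is_cokernel C \<beta> j"
  unfolding is_cokernel_def
proof (intro conjI ballI impI)
  note PD = pushoutD[OF P] and Q = cokernelD[OF q]
  have Y: "Cod C \<alpha> = Y" using \<beta>f homD[OF comp_hom[OF PD(3) \<beta>]] by simp
  show "j \<in> Arr C" "\<beta> \<in> Arr C" "Dom C \<beta> = Cod C j" "\<beta> \<cdot> j = Zero C (Dom C j) (Cod C \<beta>)"
    using homD[OF PD(4)] homD[OF \<beta>] \<beta>j by simp_all
  fix t g assume "g \<in> hom C (Cod C j) t" and "g \<cdot> j = Zero C (Dom C j) t"
  then have g: "g \<in> hom C (Cod C f) t" and gj: "g \<cdot> j = Zero C (Cod C u) t" using homD[OF PD(4)] by simp_all
  have "(g \<cdot> f) \<cdot> i = Zero C (Dom C i) t"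
    using comp_assoc[OF PD(1) PD(3) g] PD(5) comp_assoc[OF PD(2) PD(4) g] gj
      zero_comp[OF PD(2)] hom_objs[OF g] by simp
  then have ex1: "\<exists>!h. h \<in> hom C Y t \<and> h \<cdot> \<alpha> = g \<cdot> f"
    using cokernel_univ[OF q comp_hom[OF PD(3) g]] Y by simp
  have "h \<cdot> \<beta> = g \<longleftrightarrow> h \<cdot> \<alpha> = g \<cdot> f" if h: "h \<in> hom C Y t" for h
  proof
    show "h \<cdot> \<beta> = g \<Longrightarrow> h \<cdot> \<alpha> = g \<cdot> f" using comp_assoc[OF PD(3) \<beta> h] \<beta>f by simp
    assume h\<alpha>: "h \<cdot> \<alpha> = g \<cdot> f"
    show "h \<cdot> \<beta> = g"
    proof (rule pushout_arr_eqI[OF P comp_hom[OF \<beta> h] g])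
      show "(h \<cdot> \<beta>) \<cdot> f = g \<cdot> f" using comp_assoc[OF PD(3) \<beta> h] \<beta>f h\<alpha> by simp
      show "(h \<cdot> \<beta>) \<cdot> j = g \<cdot> j"
        using comp_assoc[OF PD(4) \<beta> h] \<beta>j gj comp_zero[OF h] hom_objs[OF PD(2)] by simp
    qed
  qed
  with ex1 show "\<exists>!h. h \<in> hom C (Cod C \<beta>) t \<and> h \<cdot> \<beta> = g" using homD[OF \<beta>] by auto
qed

lemma Gamma_linear_endo_comp_right:
  assumes u: "u \<in> hom C K K"
  shows "Gamma_linear_endo C K (\<lambda>w. w \<cdot> u)"
  unfolding Gamma_linear_endo_def
proof (intro conjI ballI)
  fix w w' \<gamma> assume w: "w \<in> hom C K K" and w': "w' \<in> hom C K K" and \<gamma>: "\<gamma> \<in> hom C K K"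
  show "w \<cdot> u \<in> hom C K K" using comp_hom[OF u w] .
  show "(w \<oplus> w') \<cdot> u = w \<cdot> u \<oplus> w' \<cdot> u" using add_comp[OF u w w'] .
  show "(\<gamma> \<cdot> w) \<cdot> u = \<gamma> \<cdot> (w \<cdot> u)" using comp_assoc[OF u w \<gamma>] by simp
qed

lemma Gamma_linear_endo_eq_comp_right:
  assumes "Gamma_linear_endo C K \<phi>" and w: "w \<in> hom C K K"
  shows "\<phi> w = w \<cdot> \<phi> (Ident C K)"
proof -
  have "Ident C K \<in> hom C K K" using hom_objs[OF w] by blast
  then have "\<phi> (w \<cdot> Ident C K) = w \<cdot> \<phi> (Ident C K)"
    using assms unfolding Gamma_linear_endo_def by blast
  then show ?thesis using comp_id[OF w] by simp
qed

end

locale abelian_cat =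
  fixes C :: "('o,'m) acat"
  assumes abelian: "abelian C"

sublocale abelian_cat \<subseteq> preadditive_cat
  using abelian unfolding abelian_def by unfold_locales blast

context abelian_cat
begin

lemma mono_is_kernel: "mono C f \<Longrightarrow> \<exists>g. is_kernel C f g"
  using abelian unfolding abelian_def by blast

lemma cokernel_exists: "f \<in> Arr C \<Longrightarrow> \<exists>q. is_cokernel C q f"
  using abelian unfolding abelian_def by blast

lemma biproduct_exists:
  "a \<in> Obj C \<Longrightarrow> b \<in> Obj C \<Longrightarrow> \<exists>p i1 i2 p1 p2. is_biproduct C a b p i1 i2 p1 p2"
  using abelian unfolding abelian_def by blast

lemma mono_epi_iso:
  assumes m: "mono C h" and e: "epi C h" and h: "h \<in> hom C a b"
  shows "iso C h"
proof -
  obtain g where g: "is_kernel C h g" using mono_is_kernel[OF m] by blast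
  note G = kernelD[OF g]
  obtain c where gc: "g \<in> hom C b c" using G(2) homD[OF G(1)] homD[OF h] by auto
  have "g \<cdot> h = Zero C b c \<cdot> h"
    using G(3) zero_comp[OF h] hom_objs[OF gc] homD[OF h] homD[OF gc] by simp
  then have "g = Zero C b c" using epi_cancel[OF e h gc] hom_objs[OF gc] by blast
  then have "g \<cdot> Ident C b = Zero C b (Cod C g)" using comp_id[OF gc] homD[OF gc] by simp
  then obtain k where k: "k \<in> hom C b a" "h \<cdot> k = Ident C b"
    using kernel_factor[OF g] hom_objs[OF h] homD[OF h] homD[OF gc] by (metis id_hom)
  have "h \<cdot> (k \<cdot> h) = h \<cdot> Ident C a"
    using comp_assoc[OF h k(1) h] k(2) id_comp[OF h] comp_id[OF h] by simp
  then have "k \<cdot> h = Ident C a" using mono_cancel[OF m h comp_hom[OF h k(1)]] hom_objs[OF h] by blast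
  then show ?thesis using isoI[OF h k(1) _ k(2)] by simp
qed

lemma mono_is_kernel_of_cokernel:
  assumes m: "mono C m" and q: "is_cokernel C q m"
  shows "is_kernel C m q"
proof -
  obtain g where g: "is_kernel C m g" using mono_is_kernel[OF m] by blast
  note G = kernelD[OF g] and Q = cokernelD[OF q]
  have dq: "Dom C q = Dom C g" using homD[OF G(1)] homD[OF Q(1)] by simp
  obtain r where r: "r \<in> hom C (Cod C q) (Cod C g)" "r \<cdot> q = g"
    using cokernel_factor[OF q _ G(3)] G(2) homD[OF G(1)] by metis
  show ?thesis unfolding is_kernel_def
  proof (intro conjI ballI impI)
    show "q \<in> Arr C" "m \<in> Arr C" "Cod C m = Dom C q" "q \<cdot> m = Zero C (Dom C m) (Cod C q)"
      using homD[OF Q(1)] homD[OF Q(2)] Q(3) by simp_all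
    fix t y assume y: "y \<in> hom C t (Dom C q)" and qy: "q \<cdot> y = Zero C t (Cod C q)"
    have "q \<in> hom C (Dom C q) (Cod C q)" using Q(1) homD[OF Q(1)] by simp
    then have "g \<cdot> y = r \<cdot> (q \<cdot> y)" using comp_assoc[OF y _ r(1)] r(2) by simp
    also have "\<dots> = Zero C t (Cod C g)" using qy comp_zero[OF r(1)] hom_objs[OF y] by simp
    finally show "\<exists>!h. h \<in> hom C t (Dom C m) \<and> m \<cdot> h = y" using kernel_univ[OF g] y dq by simp
  qed
qed

lemma ses_morphism_mono:
  assumes s: "ses C (i, \<alpha>)" and s': "ses C (i', \<alpha>')"
    and h: "h \<in> hom C (Cod C i) (Cod C i')" and \<alpha>h: "\<alpha>' \<cdot> h = \<alpha>"
    and u: "u \<in> hom C (Dom C i) (Dom C i')" and hi: "h \<cdot> i = i' \<cdot> u" and mono_u: "mono C u"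
  shows "mono C h"
proof (rule monoI_zero[OF h])
  note S = sesD[OF s] and S' = sesD[OF s']
  fix t g assume g: "g \<in> hom C t (Cod C i)" and hg: "h \<cdot> g = Zero C t (Cod C i')"
  have t: "t \<in> Obj C" using hom_objs[OF g] by blast
  have "\<alpha> \<cdot> g = Zero C t (Cod C \<alpha>)"
    using \<alpha>h comp_assoc[OF g h S'(4)] hg comp_zero[OF S'(4) t] comp_hom[OF h S'(4)] homD by metis
  then obtain s where s: "s \<in> hom C t (Dom C i)" and si: "i \<cdot> s = g"
    using kernel_factor[OF S(1), of g t] g homD[OF S(4)] by auto
  have "i' \<cdot> (u \<cdot> s) = i' \<cdot> Zero C t (Dom C i')"
    using comp_assoc[OF s u S'(3)] hi[symmetric] comp_assoc[OF s S(3) h] si hg comp_zero[OF S'(3) t]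
    by simp
  then have "u \<cdot> s = u \<cdot> Zero C t (Dom C i)"
    using mono_cancel[OF kernel_mono[OF S'(1)] S'(3) comp_hom[OF s u]] comp_zero[OF u t]
      t hom_objs[OF u] by auto
  then have "s = Zero C t (Dom C i)" using mono_cancel[OF mono_u u s] t hom_objs[OF u] by blast
  then show "g = Zero C t (Cod C i)" using si comp_zero[OF S(3) t] by simp
qed

lemma ses_morphism_epi:
  assumes s: "ses C (i, \<alpha>)" and s': "ses C (i', \<alpha>')"
    and h: "h \<in> hom C (Cod C i) (Cod C i')" and \<alpha>h: "\<alpha>' \<cdot> h = \<alpha>"
    and u: "u \<in> hom C (Dom C i) (Dom C i')" and hi: "h \<cdot> i = i' \<cdot> u" and epi_u: "epi C u"
  shows "epi C h"
proof (rule epiI_zero[OF h])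
  note S = sesD[OF s] and S' = sesD[OF s']
  have \<alpha>: "\<alpha> \<in> hom C (Cod C i) (Cod C \<alpha>')" using \<alpha>h comp_hom[OF h S'(4)] by simp
  fix t g assume g: "g \<in> hom C (Cod C i') t" and gh: "g \<cdot> h = Zero C (Cod C i) t"
  have t: "t \<in> Obj C" using hom_objs[OF g] by blast
  have "(g \<cdot> i') \<cdot> u = Zero C (Dom C i') t \<cdot> u"
    using comp_assoc[OF u S'(3) g] hi comp_assoc[OF S(3) h g] gh zero_comp[OF S(3) t] zero_comp[OF u t]
    by simp
  then have "g \<cdot> i' = Zero C (Dom C i') t"
    using epi_cancel[OF epi_u u comp_hom[OF S'(3) g]] t hom_objs[OF u] by blast
  then obtain s where s: "s \<in> hom C (Cod C \<alpha>') t" and s\<alpha>: "s \<cdot> \<alpha>' = g"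
    using cokernel_factor[OF S'(2), of g t] g by auto
  have "s \<cdot> \<alpha> = Zero C (Cod C \<alpha>') t \<cdot> \<alpha>"
    using \<alpha>h comp_assoc[OF h S'(4) s] s\<alpha> gh zero_comp[OF \<alpha> t] by simp
  then have "s = Zero C (Cod C \<alpha>') t"
    using epi_cancel[OF cokernel_epi[OF S(2)] \<alpha> s] t hom_objs[OF \<alpha>] by blast
  then show "g = Zero C (Cod C i') t" using s\<alpha> zero_comp[OF S'(4) t] by simp
qed

lemma short_five_lemma:
  assumes "ses C (i, \<alpha>)" "ses C (i', \<alpha>')" "h \<in> hom C (Cod C i) (Cod C i')" "\<alpha>' \<cdot> h = \<alpha>"
    "u \<in> hom C (Dom C i) (Dom C i')" "h \<cdot> i = i' \<cdot> u" "iso C u"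
  shows "iso C h"
  using mono_epi_iso ses_morphism_mono[OF assms(1-6)] ses_morphism_epi[OF assms(1-6)]
    iso_mono[OF assms(7,5)] iso_epi[OF assms(7,5)] assms(3) by blast

lemma pushout_exists:
  assumes i: "i \<in> hom C K X" and u: "u \<in> hom C K K'"
  obtains f j where "is_pushout C i u f j"
proof -
  obtain P i1 i2 p1 p2 where B: "is_biproduct C X K' P i1 i2 p1 p2"
    using biproduct_exists hom_objs[OF i] hom_objs[OF u] by blast
  note D = biproductD[OF B]
  have "i1 \<cdot> i \<oplus> i2 \<cdot> neg u \<in> hom C K P"
    using add_hom[OF comp_hom[OF i D(1)] comp_hom[OF neg(1)[OF u] D(2)]] .
  then obtain q where "is_cokernel C q (i1 \<cdot> i \<oplus> i2 \<cdot> neg u)" using cokernel_exists homD by blast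
  then show ?thesis using cokernel_is_pushout[OF B i u] that by blast
qed

text \<open>The pushout \<open>(f, j)\<close> is the cokernel of the monomorphism \<open>(i, -u) : K \<rightarrow> X \<oplus> K'\<close>, which is
  therefore its kernel; so \<open>j a = 0\<close> makes \<open>(0, a)\<close> factor through \<open>(i, -u)\<close>, forcing \<open>a = 0\<close>.\<close>
lemma pushout_mono:
  assumes P: "is_pushout C i u f j" and mono_i: "mono C i"
  shows "mono C j"
proof -
  note PD = pushoutD[OF P]
  define K X K' E where "K = Dom C i" "X = Cod C i" "K' = Cod C u" "E = Cod C f"
  note defs = K_X_K'_E_def
  have i: "i \<in> hom C K X" and u: "u \<in> hom C K K'" and f: "f \<in> hom C X E" and j: "j \<in> hom C K' E"
    using PD unfolding defs by simp_all
  have X: "X \<in> Obj C" and K: "K \<in> Obj C" using hom_objs[OF i] by auto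
  obtain P i1 i2 p1 p2 where B: "is_biproduct C X K' P i1 i2 p1 p2"
    using biproduct_exists hom_objs[OF i] hom_objs[OF u] by blast
  note D = biproductD[OF B]
  define m where "m = i1 \<cdot> i \<oplus> i2 \<cdot> neg u"
  define c where "c = f \<cdot> p1 \<oplus> j \<cdot> p2"
  have m: "m \<in> hom C K P"
    unfolding m_def using add_hom[OF comp_hom[OF i D(1)] comp_hom[OF neg(1)[OF u] D(2)]] .
  have c: "c \<in> hom C P E" unfolding c_def using add_hom[OF comp_hom[OF D(3) f] comp_hom[OF D(4) j]] .
  have p1m: "p1 \<cdot> m = i" unfolding m_def using biproduct_fst_pair[OF B i neg(1)[OF u]] .
  have ci2: "c \<cdot> i2 = j" unfolding c_def using biproduct_copair_snd[OF B f j] .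
  have "mono C m" unfolding m_def using biproduct_diff_mono[OF B i u mono_i] .
  moreover have "is_cokernel C c m"
    unfolding c_def m_def using pushout_is_cokernel[OF P B i u] .
  ultimately have ker: "is_kernel C m c" by (rule mono_is_kernel_of_cokernel)
  show ?thesis
  proof (rule monoI_zero[OF j])
    fix t a assume a: "a \<in> hom C t K'" and ja: "j \<cdot> a = Zero C t E"
    have t: "t \<in> Obj C" using hom_objs[OF a] by blast
    have "c \<cdot> (i2 \<cdot> a) = Zero C t (Cod C c)" using comp_assoc[OF a D(2) c] ci2 ja homD[OF c] by simp
    then obtain b where b: "b \<in> hom C t K" and mb: "m \<cdot> b = i2 \<cdot> a"
      using kernel_factor[OF ker, of "i2 \<cdot> a" t] comp_hom[OF a D(2)] homD[OF c] homD[OF m] by auto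
    have "i \<cdot> b = i \<cdot> Zero C t K"
      using comp_assoc[OF b m D(3)] p1m mb comp_assoc[OF a D(2) D(3)] D(7) zero_comp[OF a X]
        comp_zero[OF i t] by simp
    then have "b = Zero C t K" using mono_cancel[OF mono_i i b] t K by blast
    then have "i2 \<cdot> a = Zero C t P" using mb comp_zero[OF m t] by simp
    then show "a = Zero C t K'"
      using comp_assoc[OF a D(2) D(4)] D(6) id_comp[OF a] comp_zero[OF D(4) t] by simp
  qed
qed

lemma pushout_ext_exists:
  assumes s: "ses C (i, \<alpha>)" and u: "u \<in> hom C (Dom C i) K'"
  shows "\<exists>\<eta>. pushout_ext C u (i, \<alpha>) \<eta>"
proof -
  note S = sesD[OF s]
  obtain f j where P: "is_pushout C i u f j" using pushout_exists[OF S(3) u] by blast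
  have Y: "Cod C \<alpha> \<in> Obj C" and K': "K' \<in> Obj C" using hom_objs[OF S(4)] hom_objs[OF u] by auto
  have z: "Zero C K' (Cod C \<alpha>) \<in> hom C (Cod C u) (Cod C \<alpha>)" using zero_hom[OF K' Y] homD[OF u] by simp
  have "\<alpha> \<cdot> i = Zero C K' (Cod C \<alpha>) \<cdot> u" using S(5) zero_comp[OF u Y] by simp
  from pushout_univ[OF P S(4) z this]
  obtain \<beta> where "\<beta> \<in> hom C (Cod C f) (Cod C \<alpha>)" "\<beta> \<cdot> f = \<alpha>" "\<beta> \<cdot> j = Zero C K' (Cod C \<alpha>)"
    by blast
  then have "pushout_ext C u (i, \<alpha>) (j, \<beta>)" unfolding pushout_ext_def using P homD[OF u] by auto
  then show ?thesis by blast
qed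

lemma pushout_ext_ses:
  assumes s: "ses C (i, \<alpha>)" and pe: "pushout_ext C u (i, \<alpha>) (j, \<beta>)"
  shows "ses C (j, \<beta>)"
proof -
  note S = sesD[OF s]
  obtain f where P: "is_pushout C i u f j" and "\<beta> \<in> hom C (Cod C f) (Cod C \<alpha>)"
    and "\<beta> \<cdot> f = \<alpha>" and "\<beta> \<cdot> j = Zero C (Cod C u) (Cod C \<alpha>)"
    using pe unfolding pushout_ext_def by auto
  then have "is_cokernel C \<beta> j" using pushout_cokernel[OF P S(2)] by blast
  moreover have "mono C j" using pushout_mono[OF P kernel_mono[OF S(1)]] .
  ultimately show ?thesis unfolding ses_def using mono_is_kernel_of_cokernel by simp
qed

lemma ext_equiv_refl: assumes "ses C (i, \<alpha>)" shows "ext_equiv C (i, \<alpha>) (i, \<alpha>)"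
proof -
  note S = sesD[OF assms]
  have "Cod C i \<in> Obj C" using hom_objs[OF S(3)] by blast
  then show ?thesis unfolding ext_equiv_def using assms id_hom id_comp[OF S(3)] comp_id[OF S(4)] by auto
qed

lemma ext_equiv_trans:
  assumes "ext_equiv C (i1, \<alpha>1) (i2, \<alpha>2)" "ext_equiv C (i2, \<alpha>2) (i3, \<alpha>3)"
  shows "ext_equiv C (i1, \<alpha>1) (i3, \<alpha>3)"
proof -
  obtain f where f: "f \<in> hom C (Cod C i1) (Cod C i2)" "f \<cdot> i1 = i2" "\<alpha>2 \<cdot> f = \<alpha>1"
    using assms(1) unfolding ext_equiv_def by auto
  obtain g where g: "g \<in> hom C (Cod C i2) (Cod C i3)" "g \<cdot> i2 = i3" "\<alpha>3 \<cdot> g = \<alpha>2"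
    using assms(2) unfolding ext_equiv_def by auto
  have "ses C (i1, \<alpha>1)" "ses C (i3, \<alpha>3)" using assms unfolding ext_equiv_def by auto
  then have "(g \<cdot> f) \<cdot> i1 = i3" "\<alpha>3 \<cdot> (g \<cdot> f) = \<alpha>1"
    using comp_assoc[OF sesD(3) f(1) g(1)] comp_assoc[OF f(1) g(1) sesD(4)] f g by simp_all
  with comp_hom[OF f(1) g(1)] show ?thesis using assms unfolding ext_equiv_def by auto
qed

lemma ext_equiv_sym:
  assumes "ext_equiv C (i, \<alpha>) (i', \<alpha>')"
  shows "ext_equiv C (i', \<alpha>') (i, \<alpha>)"
proof -
  obtain f where f: "f \<in> hom C (Cod C i) (Cod C i')" "f \<cdot> i = i'" "\<alpha>' \<cdot> f = \<alpha>"
    using assms unfolding ext_equiv_def by auto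
  have s: "ses C (i, \<alpha>)" and s': "ses C (i', \<alpha>')" and KK: "Dom C i = Dom C i'"
    using assms unfolding ext_equiv_def ker_obj_def by auto
  note S = sesD[OF s] and S' = sesD[OF s']
  have K: "Dom C i \<in> Obj C" using hom_objs[OF S(3)] by blast
  have "iso C (Ident C (Dom C i))" using isoI[OF id_hom[OF K] id_hom[OF K]] id_comp[OF id_hom[OF K]] by simp
  moreover have "f \<cdot> i = i' \<cdot> Ident C (Dom C i)" using f(2) comp_id[OF S'(3)] KK by simp
  ultimately have "iso C f" using short_five_lemma[OF s s' f(1) f(3)] id_hom[OF K] KK by simp
  then obtain g where g: "g \<in> hom C (Cod C i') (Cod C i)"
    "g \<cdot> f = Ident C (Cod C i)" "f \<cdot> g = Ident C (Cod C i')"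
    using isoE[OF _ f(1)] by blast
  have "g \<cdot> i' = i" using f(2) comp_assoc[OF S(3) f(1) g(1)] g(2) id_comp[OF S(3)] by simp
  moreover have "\<alpha> \<cdot> g = \<alpha>'" using f(3) comp_assoc[OF g(1) f(1) S'(4)] g(3) comp_id[OF S'(4)] by simp
  ultimately show ?thesis using assms g(1) unfolding ext_equiv_def by auto
qed

lemma ext_class_eqI:
  assumes "ext_equiv C \<xi> \<eta>"
  shows "ext_class C \<xi> = ext_class C \<eta>"
proof -
  obtain i \<alpha> j \<beta> where \<xi>: "\<xi> = (i, \<alpha>)" and \<eta>: "\<eta> = (j, \<beta>)" by fastforce
  have "ext_equiv C (i, \<alpha>) (j, \<beta>)" "ext_equiv C (j, \<beta>) (i, \<alpha>)"
    using assms ext_equiv_sym unfolding \<xi> \<eta> by auto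
  then have "ext_equiv C (i, \<alpha>) (k, \<gamma>) \<longleftrightarrow> ext_equiv C (j, \<beta>) (k, \<gamma>)" for k \<gamma>
    using ext_equiv_trans by blast
  then show ?thesis unfolding ext_class_def \<xi> \<eta> by fastforce
qed

lemma conn_representative:
  assumes s: "ses C (i, \<alpha>)" and u: "u \<in> hom C (Dom C i) K'"
  obtains j \<beta> f where "conn C (i, \<alpha>) u = ext_class C (j, \<beta>)" "ses C (j, \<beta>)"
    "is_pushout C i u f j" "\<beta> \<in> hom C (Cod C f) (Cod C \<alpha>)" "\<beta> \<cdot> f = \<alpha>"
    "\<beta> \<cdot> j = Zero C K' (Cod C \<alpha>)"
proof -
  define \<eta> where "\<eta> = (SOME \<eta>. pushout_ext C u (i, \<alpha>) \<eta>)"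
  obtain j \<beta> where \<eta>_eq: "\<eta> = (j, \<beta>)" by fastforce
  have pe: "pushout_ext C u (i, \<alpha>) (j, \<beta>)"
    using someI_ex[OF pushout_ext_exists[OF s u]] unfolding \<eta>_def[symmetric] \<eta>_eq .
  then obtain f where "is_pushout C i u f j" "\<beta> \<in> hom C (Cod C f) (Cod C \<alpha>)" "\<beta> \<cdot> f = \<alpha>"
    "\<beta> \<cdot> j = Zero C K' (Cod C \<alpha>)" using homD[OF u] unfolding pushout_ext_def by auto
  moreover have "conn C (i, \<alpha>) u = ext_class C (j, \<beta>)" unfolding conn_def \<eta>_def[symmetric] \<eta>_eq ..
  ultimately show ?thesis using that pushout_ext_ses[OF s pe] by blast
qed

lemma conn_id:
  assumes s: "ses C (i, \<alpha>)"
  shows "conn C (i, \<alpha>) (Ident C (Dom C i)) = ext_class C (i, \<alpha>)"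
proof -
  note S = sesD[OF s]
  have id: "Ident C (Dom C i) \<in> hom C (Dom C i) (Dom C i)" using hom_objs[OF S(3)] by blast
  obtain j \<beta> f where c: "conn C (i, \<alpha>) (Ident C (Dom C i)) = ext_class C (j, \<beta>)"
    and s': "ses C (j, \<beta>)" and P: "is_pushout C i (Ident C (Dom C i)) f j"
    and \<beta>: "\<beta> \<in> hom C (Cod C f) (Cod C \<alpha>)" "\<beta> \<cdot> f = \<alpha>"
    using conn_representative[OF s id] by metis
  note PD = pushoutD[OF P]
  have j: "j \<in> hom C (Dom C i) (Cod C f)" using PD(4) homD[OF id] by simp
  have "ext_equiv C (i, \<alpha>) (j, \<beta>)" unfolding ext_equiv_def ker_obj_def end_obj_def
    using s s' homD[OF j] homD[OF \<beta>(1)] PD(3,5) comp_id[OF j] \<beta>(2) by auto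
  then show ?thesis using ext_class_eqI c by simp
qed

lemma conn_comp_right:
  assumes s: "ses C (i, \<alpha>)" and h: "h \<in> hom C (Cod C i) (Cod C i)" and \<alpha>h: "\<alpha> \<cdot> h = \<alpha>"
    and hi: "h \<cdot> i = i \<cdot> u" and u: "u \<in> hom C (Dom C i) (Dom C i)" and w: "w \<in> hom C (Dom C i) K'"
  shows "conn C (i, \<alpha>) (w \<cdot> u) = conn C (i, \<alpha>) w"
proof -
  note S = sesD[OF s]
  have wu: "w \<cdot> u \<in> hom C (Dom C i) K'" using comp_hom[OF u w] .
  obtain j1 \<beta>1 f1 where c1: "conn C (i, \<alpha>) (w \<cdot> u) = ext_class C (j1, \<beta>1)" and s1: "ses C (j1, \<beta>1)"
    and P1: "is_pushout C i (w \<cdot> u) f1 j1" and \<beta>1: "\<beta>1 \<in> hom C (Cod C f1) (Cod C \<alpha>)" "\<beta>1 \<cdot> f1 = \<alpha>"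
    "\<beta>1 \<cdot> j1 = Zero C K' (Cod C \<alpha>)"
    using conn_representative[OF s wu] by metis
  obtain j2 \<beta>2 f2 where c2: "conn C (i, \<alpha>) w = ext_class C (j2, \<beta>2)" and s2: "ses C (j2, \<beta>2)"
    and P2: "is_pushout C i w f2 j2" and \<beta>2: "\<beta>2 \<in> hom C (Cod C f2) (Cod C \<alpha>)" "\<beta>2 \<cdot> f2 = \<alpha>"
    "\<beta>2 \<cdot> j2 = Zero C K' (Cod C \<alpha>)"
    using conn_representative[OF s w] by metis
  note P1D = pushoutD[OF P1] and P2D = pushoutD[OF P2]
  have j1: "j1 \<in> hom C K' (Cod C f1)" and j2: "j2 \<in> hom C K' (Cod C f2)"
    using P1D(4) P2D(4) homD[OF w] homD[OF wu] by simp_all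
  have "(f2 \<cdot> h) \<cdot> i = j2 \<cdot> (w \<cdot> u)"
    using comp_assoc[OF S(3) h P2D(3)] hi comp_assoc[OF u S(3) P2D(3)] P2D(5)
      comp_assoc[OF u w j2] by simp
  moreover have "j2 \<in> hom C (Cod C (w \<cdot> u)) (Cod C f2)" using j2 homD[OF wu] by simp
  ultimately obtain p where p: "p \<in> hom C (Cod C f1) (Cod C f2)" "p \<cdot> f1 = f2 \<cdot> h" "p \<cdot> j1 = j2"
    using pushout_univ[OF P1 comp_hom[OF h P2D(3)]] by blast
  have "\<beta>2 \<cdot> p = \<beta>1"
  proof (rule pushout_arr_eqI[OF P1 comp_hom[OF p(1) \<beta>2(1)] \<beta>1(1)])
    show "(\<beta>2 \<cdot> p) \<cdot> f1 = \<beta>1 \<cdot> f1"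
      using comp_assoc[OF P1D(3) p(1) \<beta>2(1)] p(2) comp_assoc[OF h P2D(3) \<beta>2(1)] \<beta>2(2) \<alpha>h \<beta>1(2) by simp
    show "(\<beta>2 \<cdot> p) \<cdot> j1 = \<beta>1 \<cdot> j1" using comp_assoc[OF j1 p(1) \<beta>2(1)] p(3) \<beta>2(3) \<beta>1(3) by simp
  qed
  then have "ext_equiv C (j1, \<beta>1) (j2, \<beta>2)" unfolding ext_equiv_def ker_obj_def end_obj_def
    using s1 s2 homD[OF j1] homD[OF j2] homD[OF \<beta>1(1)] homD[OF \<beta>2(1)] p(1,3) by auto
  then show ?thesis using ext_class_eqI c1 c2 by simp
qed

lemma conn_eq_ext_class_iff:
  assumes s: "ses C (i, \<alpha>)" and u: "u \<in> hom C (Dom C i) (Dom C i)"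
  shows "ext_class C (i, \<alpha>) = conn C (i, \<alpha>) u \<longleftrightarrow>
    (\<exists>h\<in>hom C (Cod C i) (Cod C i). \<alpha> \<cdot> h = \<alpha> \<and> h \<cdot> i = i \<cdot> u)"
proof
  note S = sesD[OF s]
  assume eq: "ext_class C (i, \<alpha>) = conn C (i, \<alpha>) u"
  obtain j \<beta> f where c: "conn C (i, \<alpha>) u = ext_class C (j, \<beta>)"
    and P: "is_pushout C i u f j" and \<beta>f: "\<beta> \<cdot> f = \<alpha>"
    using conn_representative[OF s u] by metis
  note PD = pushoutD[OF P]
  have "(i, \<alpha>) \<in> ext_class C (i, \<alpha>)" unfolding ext_class_def using ext_equiv_refl[OF s] by simp
  then have "ext_equiv C (j, \<beta>) (i, \<alpha>)" using eq c unfolding ext_class_def by simp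
  then obtain g where g: "g \<in> hom C (Cod C f) (Cod C i)" "g \<cdot> j = i" "\<alpha> \<cdot> g = \<beta>"
    using homD[OF PD(4)] unfolding ext_equiv_def by auto
  have "\<alpha> \<cdot> (g \<cdot> f) = \<alpha>" using comp_assoc[OF PD(3) g(1) S(4)] g(3) \<beta>f by simp
  moreover have "(g \<cdot> f) \<cdot> i = i \<cdot> u"
    using comp_assoc[OF S(3) PD(3) g(1)] PD(5) comp_assoc[OF PD(2) PD(4) g(1)] g(2) by simp
  ultimately show "\<exists>h\<in>hom C (Cod C i) (Cod C i). \<alpha> \<cdot> h = \<alpha> \<and> h \<cdot> i = i \<cdot> u"
    using comp_hom[OF PD(3) g(1)] by blast
next
  assume "\<exists>h\<in>hom C (Cod C i) (Cod C i). \<alpha> \<cdot> h = \<alpha> \<and> h \<cdot> i = i \<cdot> u"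
  moreover have id: "Ident C (Dom C i) \<in> hom C (Dom C i) (Dom C i)" using hom_objs[OF u] by blast
  ultimately have "conn C (i, \<alpha>) (Ident C (Dom C i) \<cdot> u) = conn C (i, \<alpha>) (Ident C (Dom C i))"
    using conn_comp_right[OF s _ _ _ u id] by blast
  then show "ext_class C (i, \<alpha>) = conn C (i, \<alpha>) u" using conn_id[OF s] id_comp[OF u] by simp
qed

lemma ses_endo_iso_restrict:
  assumes s: "ses C (i, \<alpha>)" and u: "u \<in> hom C (Dom C i) (Dom C i)"
    and h: "h \<in> hom C (Cod C i) (Cod C i)" and iso_h: "iso C h"
    and \<alpha>h: "\<alpha> \<cdot> h = \<alpha>" and hi: "h \<cdot> i = i \<cdot> u"
  shows "iso C u"
proof -
  note S = sesD[OF s]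
  obtain k where k: "k \<in> hom C (Cod C i) (Cod C i)" "k \<cdot> h = Ident C (Cod C i)" "h \<cdot> k = Ident C (Cod C i)"
    using isoE[OF iso_h h] by blast
  have "\<alpha> \<cdot> k = \<alpha>" using comp_assoc[OF k(1) h S(4)] \<alpha>h k(3) comp_id[OF S(4)] by simp
  then have "\<alpha> \<cdot> (k \<cdot> i) = Zero C (Dom C i) (Cod C \<alpha>)" using comp_assoc[OF S(3) k(1) S(4)] S(5) by simp
  then obtain v where v: "v \<in> hom C (Dom C i) (Dom C i)" and iv: "i \<cdot> v = k \<cdot> i"
    using kernel_factor[OF S(1), of "k \<cdot> i"] comp_hom[OF S(3) k(1)] homD[OF S(4)] by auto
  have K: "Dom C i \<in> Obj C" using hom_objs[OF u] by blast
  have "i \<cdot> (u \<cdot> v) = i \<cdot> Ident C (Dom C i)"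
    using comp_assoc[OF v u S(3)] hi[symmetric] comp_assoc[OF v S(3) h] iv comp_assoc[OF S(3) k(1) h]
      k(3) id_comp[OF S(3)] comp_id[OF S(3)] by simp
  then have "u \<cdot> v = Ident C (Dom C i)"
    using mono_cancel[OF kernel_mono[OF S(1)] S(3) comp_hom[OF v u] id_hom[OF K]] by simp
  moreover have "i \<cdot> (v \<cdot> u) = i \<cdot> Ident C (Dom C i)"
    using comp_assoc[OF u v S(3)] iv comp_assoc[OF u S(3) k(1)] hi[symmetric] comp_assoc[OF S(3) h k(1)]
      k(2) id_comp[OF S(3)] comp_id[OF S(3)] by simp
  then have "v \<cdot> u = Ident C (Dom C i)"
    using mono_cancel[OF kernel_mono[OF S(1)] S(3) comp_hom[OF u v] id_hom[OF K]] by simp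
  ultimately show ?thesis using isoI[OF u v] by simp
qed

lemma right_minimal_iff_conn:
  assumes s: "ses C (i, \<alpha>)"
  shows "right_minimal C \<alpha> \<longleftrightarrow>
    (\<forall>u\<in>hom C (Dom C i) (Dom C i). ext_class C (i, \<alpha>) = conn C (i, \<alpha>) u \<longrightarrow> iso C u)"
proof (intro iffI ballI impI)
  note S = sesD[OF s]
  have dom_\<alpha>: "Dom C \<alpha> = Cod C i" using homD[OF S(4)] by simp
  {
    fix u assume rm: "right_minimal C \<alpha>" and u: "u \<in> hom C (Dom C i) (Dom C i)"
      and "ext_class C (i, \<alpha>) = conn C (i, \<alpha>) u"
    then obtain h where h: "h \<in> hom C (Cod C i) (Cod C i)" "\<alpha> \<cdot> h = \<alpha>" "h \<cdot> i = i \<cdot> u"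
      using conn_eq_ext_class_iff[OF s u] by blast
    then have "iso C h" using rm dom_\<alpha> unfolding right_minimal_def by simp
    then show "iso C u" using ses_endo_iso_restrict[OF s u h(1) _ h(2,3)] by blast
  }
  assume H: "\<forall>u\<in>hom C (Dom C i) (Dom C i). ext_class C (i, \<alpha>) = conn C (i, \<alpha>) u \<longrightarrow> iso C u"
  show "right_minimal C \<alpha>" unfolding right_minimal_def
  proof (intro conjI ballI impI)
    show "\<alpha> \<in> Arr C" using homD[OF S(4)] by blast
    fix h assume "h \<in> hom C (Dom C \<alpha>) (Dom C \<alpha>)" and \<alpha>h: "\<alpha> \<cdot> h = \<alpha>"
    then have h: "h \<in> hom C (Cod C i) (Cod C i)" using dom_\<alpha> by simp
    have "\<alpha> \<cdot> (h \<cdot> i) = Zero C (Dom C i) (Cod C \<alpha>)" using comp_assoc[OF S(3) h S(4)] \<alpha>h S(5) by simp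
    then obtain u where u: "u \<in> hom C (Dom C i) (Dom C i)" and iu: "i \<cdot> u = h \<cdot> i"
      using kernel_factor[OF S(1), of "h \<cdot> i"] comp_hom[OF S(3) h] dom_\<alpha> by auto
    then have "ext_class C (i, \<alpha>) = conn C (i, \<alpha>) u"
      using conn_eq_ext_class_iff[OF s u] h \<alpha>h iu[symmetric] by blast
    then have "iso C u" using H u by blast
    then show "iso C h" using short_five_lemma[OF s s h \<alpha>h u iu[symmetric]] by blast
  qed
qed

lemma conn_right_minimal_iff:
  assumes s: "ses C (i, \<alpha>)"
  shows "conn_right_minimal C (i, \<alpha>) \<longleftrightarrow>
    (\<forall>u\<in>hom C (Dom C i) (Dom C i). ext_class C (i, \<alpha>) = conn C (i, \<alpha>) u \<longrightarrow> iso C u)"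
    (is "_ \<longleftrightarrow> (\<forall>u\<in>hom C ?K ?K. _)")
proof
  assume R: "conn_right_minimal C (i, \<alpha>)"
  show "\<forall>u\<in>hom C ?K ?K. ext_class C (i, \<alpha>) = conn C (i, \<alpha>) u \<longrightarrow> iso C u"
  proof (intro ballI impI)
    fix u assume u: "u \<in> hom C ?K ?K" and "ext_class C (i, \<alpha>) = conn C (i, \<alpha>) u"
    then obtain h where "h \<in> hom C (Cod C i) (Cod C i)" "\<alpha> \<cdot> h = \<alpha>" "h \<cdot> i = i \<cdot> u"
      using conn_eq_ext_class_iff[OF s] by blast
    then have "\<forall>w\<in>hom C ?K ?K. conn C (i, \<alpha>) (w \<cdot> u) = conn C (i, \<alpha>) w"
      using conn_comp_right[OF s] u by blast
    with Gamma_linear_endo_comp_right[OF u] R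
    have "bij_betw (\<lambda>w. w \<cdot> u) (hom C ?K ?K) (hom C ?K ?K)"
      unfolding conn_right_minimal_def ker_obj_def fst_conv by blast
    then show "iso C u" using bij_comp_right_iff_iso[OF u] by blast
  qed
next
  assume H: "\<forall>u\<in>hom C ?K ?K. ext_class C (i, \<alpha>) = conn C (i, \<alpha>) u \<longrightarrow> iso C u"
  show "conn_right_minimal C (i, \<alpha>)" unfolding conn_right_minimal_def ker_obj_def fst_conv
  proof (intro allI impI, elim conjE)
    fix \<phi> assume \<phi>: "Gamma_linear_endo C ?K \<phi>"
      and c\<phi>: "\<forall>w\<in>hom C ?K ?K. conn C (i, \<alpha>) (\<phi> w) = conn C (i, \<alpha>) w"
    have id: "Ident C ?K \<in> hom C ?K ?K" using hom_objs[OF sesD(3)[OF s]] by blast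
    define u where "u = \<phi> (Ident C ?K)"
    have u: "u \<in> hom C ?K ?K" using \<phi> id unfolding u_def Gamma_linear_endo_def by blast
    have "ext_class C (i, \<alpha>) = conn C (i, \<alpha>) u" using c\<phi> id conn_id[OF s] unfolding u_def by simp
    then have "bij_betw (\<lambda>w. w \<cdot> u) (hom C ?K ?K) (hom C ?K ?K)"
      using H u bij_comp_right_iff_iso[OF u] by blast
    moreover have "bij_betw \<phi> (hom C ?K ?K) (hom C ?K ?K) \<longleftrightarrow> bij_betw (\<lambda>w. w \<cdot> u) (hom C ?K ?K) (hom C ?K ?K)"
      by (rule bij_betw_cong) (simp add: Gamma_linear_endo_eq_comp_right[OF \<phi>] u_def)
    ultimately show "bij_betw \<phi> (hom C ?K ?K) (hom C ?K ?K)" by blast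
  qed
qed

end

theorem lemma3p1:
  fixes C :: "('o,'m) acat" and i \<alpha> :: 'm
  assumes "abelian C"
    and "ses C (i, \<alpha>)"
  shows "(right_minimal C \<alpha> \<longleftrightarrow>
            (\<forall>u\<in>hom C (Dom C i) (Dom C i).
               ext_class C (i, \<alpha>) = conn C (i, \<alpha>) u \<longrightarrow> iso C u))
       \<and> ((\<forall>u\<in>hom C (Dom C i) (Dom C i).
               ext_class C (i, \<alpha>) = conn C (i, \<alpha>) u \<longrightarrow> iso C u)
            \<longleftrightarrow> conn_right_minimal C (i, \<alpha>))"
proof -
  interpret abelian_cat C using assms(1) by unfold_locales
  show ?thesis using right_minimal_iff_conn[OF assms(2)] conn_right_minimal_iff[OF assms(2)] by simp
qed

end
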